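(* Fix an agent $k$ and a neighbor $\ell$ that are paired at time $i$. Let $\delta_k\in(0,1)$, $r_k\in(0,1)$, $c_k>0$, $\theta_{k\ell}(i)\in[0,1]$, $\theta_{\ell k}(i)\in(0,1]$, and let $A_0,A_1$ be real numbers; set $b_k(i)\triangleq A_0-A_1$ and $\gamma_k(i)\triangleq b_k(i)/c_k$. For each candidate action $a\in\{0,1\}$ of agent $k$ at time $i$, define agent $k$'s forecast of its own future reputation by $\theta^a(i)=\theta_{k\ell}(i)$ and $\theta^a(t+1)=r_k\theta^a(t)+(1-r_k)a$ for $t\ge i$ (i.e., agent $k$ is forecast to repeat action $a$ at all future times $t\ge i$), and define the long-term discounted cost $$J(a)\triangleq\sum_{t=i}^{\infty}\delta_k^{t-i}\Big[\big(1-\theta^a(t)\theta_{\ell k}(i)\big)A_0+\theta^a(t)\theta_{\ell k}(i)A_1+a\,c_k\Big].$$ Agent $k$'s best response is $a_{k\ell}(i)=1$ if $J(1)<J(0)$ and $a_{k\ell}(i)=0$ otherwise. Then $$a_{k\ell}(i)=\begin{cases}1,&\text{if }\gamma_k(i)=\dfrac{b_k(i)}{c_k}>\dfrac{\chi_k}{\theta_{\ell k}(i)},\\[2mm]0,&\text{otherwise,}\end{cases}\qquad\text{where }\chi_k\triangleq\frac{1-\delta_k r_k}{\delta_k(1-r_k)}.$$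
   Context: Setting: agents estimate a common vector; at time $i$ paired agents $k,\ell$ each decide whether to share ($a=1$, costing the sharer $c_k>0$) or not ($a=0$). $A_0$ (resp. $A_1$) is agent $k$'s expected next-step mean-square estimation cost, conditioned on its current estimate, when agent $\ell$ does not share (resp. shares) its intermediate estimate; $b_k(i)=A_0-A_1$ is the benefit to $k$ of $\ell$'s sharing. Reputation scores $\theta_{\ell k}$ (kept by $k$ about $\ell$) and $\theta_{k\ell}$ (kept by $\ell$ about $k$) are updated when paired by $\theta\leftarrow r\theta+(1-r)\cdot(\text{action})$. Agent $k$ believes that $\ell$ shares at time $t$ with probability $B(a_{\ell k}(t)=1)=\theta_{k\ell}(t)\theta_{\ell k}(t)$. Bounded rationality (the paper's Assumptions 1 and 2): when choosing its action at time $i$, agent $k$ assumes that its estimate, the pairing with $\ell$, and the score $\theta_{\ell k}$ remain at their time-$i$ values for all $t\ge i$, and that both agents repeat their time-$i$ actions in the future; the cost $J(a)$ above is the resulting expected long-term discounted cost $\sum_{t\ge i}\delta_k^{t-i}\mathbb{E}[J^{\rm act}_k(a_{\ell k}(t))+a_{k\ell}(t)c_k]$, with the expectation over $a_{\ell k}(t)$ taken under the belief. *)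

theory Defs
  imports "HOL-Analysis.Analysis"
begin

text \<open>Forecast reputation: the index n stands for t - i (t >= i).
  theta_fc th0 r a 0 = th0, theta_fc (n+1) = r * theta_fc n + (1 - r) * a.\<close>
fun theta_fc :: "real \<Rightarrow> real \<Rightarrow> real \<Rightarrow> nat \<Rightarrow> real" where
  "theta_fc th0 r a 0 = th0"
| "theta_fc th0 r a (Suc n) = r * theta_fc th0 r a n + (1 - r) * a"

definition Jcost :: "real \<Rightarrow> real \<Rightarrow> real \<Rightarrow> real \<Rightarrow> real \<Rightarrow> real \<Rightarrow> real \<Rightarrow> real \<Rightarrow> real" where
  "Jcost \<delta> r c th_kl th_lk A0 A1 a =
     (\<Sum>n. \<delta> ^ n * ((1 - theta_fc th_kl r a n * th_lk) * A0
                     + theta_fc th_kl r a n * th_lk * A1 + a * c))"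

definition best_response :: "real \<Rightarrow> real \<Rightarrow> real \<Rightarrow> real \<Rightarrow> real \<Rightarrow> real \<Rightarrow> real \<Rightarrow> nat" where
  "best_response \<delta> r c th_kl th_lk A0 A1 =
     (if Jcost \<delta> r c th_kl th_lk A0 A1 1 < Jcost \<delta> r c th_kl th_lk A0 A1 0 then 1 else 0)"

definition chi :: "real \<Rightarrow> real \<Rightarrow> real" where
  "chi \<delta> r = (1 - \<delta> * r) / (\<delta> * (1 - r))"

end

theory Submission
  imports Defs
begin

text \<open>The forecast reputation converges geometrically to the repeated action, so
  each cost J(a) is the sum of two geometric series, with ratios \<delta> and \<delta> r.
  The initial reputation cancels in J(1) - J(0), which equals
  (c (1 - \<delta> r) - th_lk b \<delta> (1 - r)) / ((1 - \<delta>) (1 - \<delta> r));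
  its sign gives the threshold chi / th_lk on b / c.\<close>

lemma theta_fc_closed_form: "theta_fc th0 r a n = a + r ^ n * (th0 - a)"
proof (induction n)
  case (Suc n)
  then show ?case by (simp only: theta_fc.simps) (simp add: algebra_simps)
qed simp

lemma Jcost_closed_form:
  assumes "\<bar>\<delta>\<bar> < 1" "\<bar>\<delta> * r\<bar> < 1"
  shows "Jcost \<delta> r c th_kl th_lk A0 A1 a =
           (A0 + a * c - th_lk * (A0 - A1) * a) / (1 - \<delta>)
           - th_lk * (A0 - A1) * (th_kl - a) / (1 - \<delta> * r)"
proof -
  define u where "u = A0 + a * c - th_lk * (A0 - A1) * a"
  define v where "v = - th_lk * (A0 - A1) * (th_kl - a)"
  have "(\<lambda>n. u * \<delta> ^ n + v * (\<delta> * r) ^ n) sums (u * (1 / (1 - \<delta>)) + v * (1 / (1 - \<delta> * r)))"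
    using assms by (intro sums_add sums_mult geometric_sums) auto
  moreover have "(\<lambda>n. \<delta> ^ n * ((1 - theta_fc th_kl r a n * th_lk) * A0
                     + theta_fc th_kl r a n * th_lk * A1 + a * c))
                 = (\<lambda>n. u * \<delta> ^ n + v * (\<delta> * r) ^ n)"
    by (simp add: u_def v_def theta_fc_closed_form power_mult_distrib algebra_simps)
  ultimately show ?thesis
    unfolding Jcost_def by (simp add: sums_iff u_def v_def)
qed

lemma Jcost_share_minus_withhold:
  assumes "0 < \<delta>" "\<delta> < 1" "0 < r" "r < 1"
  shows "Jcost \<delta> r c th_kl th_lk A0 A1 1 - Jcost \<delta> r c th_kl th_lk A0 A1 0
           = (c * (1 - \<delta> * r) - th_lk * (A0 - A1) * (\<delta> * (1 - r)))
             / ((1 - \<delta>) * (1 - \<delta> * r))"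
proof -
  have "\<delta> * r < 1 * 1" using assms by (intro mult_strict_mono) auto
  moreover have "0 < \<delta> * r" using assms by simp
  ultimately have "\<bar>\<delta>\<bar> < 1" "\<bar>\<delta> * r\<bar> < 1" "1 - \<delta> \<noteq> 0" "1 - \<delta> * r \<noteq> 0"
    using assms by auto
  then show ?thesis
    by (simp add: Jcost_closed_form divide_simps) (simp add: algebra_simps)
qed

lemma share_iff_cost_ratio_above_chi:
  assumes "0 < \<delta>" "\<delta> < 1" "0 < r" "r < 1" "0 < c" "0 < th_lk"
  shows "Jcost \<delta> r c th_kl th_lk A0 A1 1 < Jcost \<delta> r c th_kl th_lk A0 A1 0
           \<longleftrightarrow> chi \<delta> r / th_lk < (A0 - A1) / c"
proof -
  have denom_pos: "0 < (1 - \<delta>) * (1 - \<delta> * r)" and "0 < \<delta> * (1 - r)"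
    using assms mult_strict_mono[of \<delta> 1 r 1] by simp_all
  have "Jcost \<delta> r c th_kl th_lk A0 A1 1 < Jcost \<delta> r c th_kl th_lk A0 A1 0
     \<longleftrightarrow> (c * (1 - \<delta> * r) - th_lk * (A0 - A1) * (\<delta> * (1 - r)))
           / ((1 - \<delta>) * (1 - \<delta> * r)) < 0"
    using Jcost_share_minus_withhold[OF assms(1-4)] by (metis diff_less_0_iff_less)
  also have "\<dots> \<longleftrightarrow> c * (1 - \<delta> * r) < th_lk * (A0 - A1) * (\<delta> * (1 - r))"
    using denom_pos by (simp add: divide_less_0_iff)
  also have "\<dots> \<longleftrightarrow> chi \<delta> r / th_lk < (A0 - A1) / c"
    using \<open>0 < \<delta> * (1 - r)\<close> assms by (simp add: chi_def field_simps)
  finally show ?thesis .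
qed

theorem lemma1:
  fixes \<delta> r c th_kl th_lk A0 A1 :: real
  assumes "0 < \<delta>" "\<delta> < 1" "0 < r" "r < 1" "0 < c"
    and "0 \<le> th_kl" "th_kl \<le> 1" "0 < th_lk" "th_lk \<le> 1"
  shows "best_response \<delta> r c th_kl th_lk A0 A1 =
           (if (A0 - A1) / c > chi \<delta> r / th_lk then 1 else 0)"
  using share_iff_cost_ratio_above_chi[of \<delta> r c th_lk th_kl A0 A1] assms
  by (simp add: best_response_def)

end
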